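(* There is a universal constant $C>0$ such that for every positive integer $T$, every $x \in \{0,1\}^T$ and every $p \in [0,1]^T$: (1) $\mathsf{CalDist}(x,p) \le \mathsf{LowerCalDist}(x,p) + C\sqrt{T}$; (2) $\mathsf{CalDist}(x,p) \le C\cdot \mathsf{LowerCalDist}(x,p) + C\, m$, where $m = |\{p_1, p_2, \ldots, p_T\}|$ is the number of distinct entries of $p$.
   Context: For $x \in \{0,1\}^T$, let $\mathcal{C}(x) = \{q \in [0,1]^T : \sum_{t=1}^T (x_t - q_t)\mathbf{1}[q_t = \alpha] = 0 \text{ for all } \alpha \in [0,1]\}$ (predictions perfectly calibrated for $x$). The calibration distance is $\mathsf{CalDist}(x,p) = \min_{q \in \mathcal{C}(x)} \|p-q\|_1$. Let $\underline{\mathcal{C}}(x)$ be the set of $T$-tuples $\mathcal{D} = (\mathcal{D}_1,\ldots,\mathcal{D}_T)$ of probability distributions, each with finite support contained in $[0,1]$, such that $\sum_{t=1}^T (x_t - \alpha)\mathcal{D}_t(\alpha) = 0$ for every $\alpha \in [0,1]$. For such $\mathcal{D}$ write $\|p - \mathcal{D}\|_1 = \sum_{t=1}^T \mathbb{E}_{q_t \sim \mathcal{D}_t}|p_t - q_t|$. The lower calibration distance is $\mathsf{LowerCalDist}(x,p) = \inf_{\mathcal{D} \in \underline{\mathcal{C}}(x)} \|p - \mathcal{D}\|_1$. *)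

theory Defs
  imports "HOL-Analysis.Analysis" "HOL-Probability.Probability"
begin

text \<open>Vectors in [0,1]^T and {0,1}^T are represented as functions nat => real,
  with coordinates t = 0, ..., T-1 (only these coordinates matter).\<close>

definition binary_vec :: "nat \<Rightarrow> (nat \<Rightarrow> real) \<Rightarrow> bool" where
  "binary_vec T x \<longleftrightarrow> (\<forall>t<T. x t \<in> {0, 1})"

definition unit_vec :: "nat \<Rightarrow> (nat \<Rightarrow> real) \<Rightarrow> bool" where
  "unit_vec T p \<longleftrightarrow> (\<forall>t<T. p t \<in> {0..1})"

definition calibrated_set :: "nat \<Rightarrow> (nat \<Rightarrow> real) \<Rightarrow> (nat \<Rightarrow> real) set" where
  "calibrated_set T x = {q. unit_vec T q \<and>
     (\<forall>\<alpha>::real. (\<Sum>t<T. (x t - q t) * (if q t = \<alpha> then 1 else 0)) = 0)}"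

definition l1_dist :: "nat \<Rightarrow> (nat \<Rightarrow> real) \<Rightarrow> (nat \<Rightarrow> real) \<Rightarrow> real" where
  "l1_dist T p q = (\<Sum>t<T. \<bar>p t - q t\<bar>)"

definition CalDist :: "nat \<Rightarrow> (nat \<Rightarrow> real) \<Rightarrow> (nat \<Rightarrow> real) \<Rightarrow> real" where
  "CalDist T x p = (INF q \<in> calibrated_set T x. l1_dist T p q)"

definition lower_calibrated_set :: "nat \<Rightarrow> (nat \<Rightarrow> real) \<Rightarrow> (nat \<Rightarrow> real pmf) set" where
  "lower_calibrated_set T x = {D. (\<forall>t<T. finite (set_pmf (D t)) \<and> set_pmf (D t) \<subseteq> {0..1}) \<and>
     (\<forall>\<alpha>::real. (\<Sum>t<T. (x t - \<alpha>) * pmf (D t) \<alpha>) = 0)}"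

definition l1_dist_dist :: "nat \<Rightarrow> (nat \<Rightarrow> real) \<Rightarrow> (nat \<Rightarrow> real pmf) \<Rightarrow> real" where
  "l1_dist_dist T p D = (\<Sum>t<T. measure_pmf.expectation (D t) (\<lambda>q. \<bar>p t - q\<bar>))"

definition LowerCalDist :: "nat \<Rightarrow> (nat \<Rightarrow> real) \<Rightarrow> (nat \<Rightarrow> real) \<Rightarrow> real" where
  "LowerCalDist T x p = (INF D \<in> lower_calibrated_set T x. l1_dist_dist T p D)"

end

theory Submission
  imports Defs
begin

text \<open>Calibrated predictions are the integral solutions of a transport problem: the time steps,
  grouped by their observation \<open>(p\<^sub>t, x\<^sub>t)\<close>, are sent to bins, and every bin predicts the
  average outcome of what it receives. A tuple of distributions that is calibrated in expectation
  is a fractional solution with one bin per atom; merging the atoms into buckets of width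
  \<open>1 / \<lceil>sqrt T\<rceil>\<close> costs at most \<open>sqrt T\<close>. A vertex of the polytope of fractional solutions has
  at most as many nonzero entries as there are observations plus used bins. Rounding the prefix
  sums of each of its rows down to integers and recentring every bin at its average outcome then
  costs at most 4 per used bin. There are at most \<open>\<lceil>sqrt T\<rceil> + 1\<close> bins after bucketing, and
  a vertex whose bins have distinct values uses at most \<open>2m + 2\<close> bins, where \<open>m\<close> is the number
  of distinct predictions: a bin predicting a value outside \<open>{0, 1}\<close> must receive two
  different observations.\<close>

section \<open>Linear systems, weighted means and integer rounding\<close>

lemma underdetermined_homogeneous_system:
  fixes F :: "'i \<Rightarrow> 's \<Rightarrow> real"
  assumes "finite I" "finite S" "card I < card S"
  shows "\<exists>d. (\<forall>s. s \<notin> S \<longrightarrow> d s = 0) \<and> (\<exists>s\<in>S. d s \<noteq> 0) \<and>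
             (\<forall>i\<in>I. (\<Sum>s\<in>S. F i s * d s) = 0)"
  using assms
proof (induction I arbitrary: S F rule: finite_induct)
  case empty
  then obtain s0 where "s0 \<in> S" by fastforce
  then show ?case by (intro exI[of _ "\<lambda>s. if s = s0 then 1 else 0"]) auto
next
  case (insert i I)
  show ?case
  proof (cases "\<forall>s\<in>S. F i s = 0")
    case True
    have "card I < card S" using insert by simp
    from insert.IH[OF insert.prems(1) this, of F] True show ?thesis by auto
  next
    case False
    then obtain s0 where s0: "s0 \<in> S" "F i s0 \<noteq> 0" by blast
    define S' where "S' = S - {s0}"
    have S: "S = insert s0 S'" and s0S': "s0 \<notin> S'" and "finite S'"
      using s0 insert.prems by (auto simp: S'_def)
    have "card I < card S'"
      using insert s0 by (simp add: S'_def card_Diff_singleton)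
    \<comment> \<open>Gaussian elimination: equation \<open>i\<close> eliminates the unknown \<open>s0\<close>.\<close>
    then obtain d' where d': "\<forall>s. s \<notin> S' \<longrightarrow> d' s = 0" "\<exists>s\<in>S'. d' s \<noteq> 0"
      and eqs: "\<forall>j\<in>I. (\<Sum>s\<in>S'. (F j s - F j s0 * F i s / F i s0) * d' s) = 0"
      using insert.IH[OF \<open>finite S'\<close>, of "\<lambda>j s. F j s - F j s0 * F i s / F i s0"] by blast
    define d where "d = d'(s0 := - (\<Sum>s\<in>S'. F i s * d' s) / F i s0)"
    have "(\<Sum>s\<in>S'. G s * d s) = (\<Sum>s\<in>S'. G s * d' s)" for G
      using s0S' by (intro sum.cong) (auto simp: d_def)
    then have sum_d: "(\<Sum>s\<in>S. G s * d s) = G s0 * d s0 + (\<Sum>s\<in>S'. G s * d' s)" for G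
      unfolding S using s0S' \<open>finite S'\<close> by simp
    have "(\<Sum>s\<in>S. F j s * d s) = 0" if "j \<in> insert i I" for j
    proof (cases "j = i")
      case True
      then show ?thesis using s0 by (simp only: sum_d) (simp add: d_def)
    next
      case False
      with that eqs have "(\<Sum>s\<in>S'. F j s * d' s) - F j s0 / F i s0 * (\<Sum>s\<in>S'. F i s * d' s) = 0"
        by (simp add: algebra_simps sum_subtractf sum_distrib_left)
      then show ?thesis by (simp only: sum_d) (simp add: d_def algebra_simps)
    qed
    moreover have "\<forall>s. s \<notin> S \<longrightarrow> d s = 0" "\<exists>s\<in>S. d s \<noteq> 0"
      using d' s0S' S by (auto simp: d_def)
    ultimately show ?thesis by blast
  qed
qed

lemma ratio_test:
  fixes u v :: "'a \<Rightarrow> real"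
  assumes "finite N" "N \<noteq> {}" "\<forall>z\<in>N. 0 \<le> u z \<and> v z < 0"
  obtains s where "0 \<le> s" "\<forall>z\<in>N. 0 \<le> u z + s * v z" "\<exists>z\<in>N. u z + s * v z = 0"
proof
  define s where "s = Min ((\<lambda>z. u z / - v z) ` N)"
  have "s \<in> (\<lambda>z. u z / - v z) ` N"
    unfolding s_def using assms(1,2) by (intro Min_in) auto
  then obtain z0 where z0: "z0 \<in> N" "s = u z0 / - v z0" by blast
  show "0 \<le> s" using z0 assms(3) by (simp add: divide_nonneg_neg)
  show "\<forall>z\<in>N. 0 \<le> u z + s * v z"
  proof
    fix z assume "z \<in> N"
    then have "s \<le> u z / - v z" and "v z < 0" using assms by (auto simp: s_def)
    then have "s * - v z \<le> u z / - v z * - v z" by (intro mult_right_mono) auto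
    with \<open>v z < 0\<close> show "0 \<le> u z + s * v z" by simp
  qed
  show "\<exists>z\<in>N. u z + s * v z = 0" using z0 assms(3) by force
qed

lemma weighted_mean_close:
  fixes v \<mu> :: "'a \<Rightarrow> real"
  assumes "finite A" "\<forall>i\<in>A. 0 \<le> \<mu> i" "(\<Sum>i\<in>A. \<mu> i) > 0" "\<forall>i\<in>A. \<bar>v i - c\<bar> \<le> \<delta>"
  shows "\<bar>(\<Sum>i\<in>A. v i * \<mu> i) / (\<Sum>i\<in>A. \<mu> i) - c\<bar> \<le> \<delta>"
proof -
  have "\<bar>(\<Sum>i\<in>A. v i * \<mu> i) - c * (\<Sum>i\<in>A. \<mu> i)\<bar> = \<bar>\<Sum>i\<in>A. (v i - c) * \<mu> i\<bar>"
    by (simp add: algebra_simps sum_subtractf sum_distrib_left)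
  also have "\<dots> \<le> (\<Sum>i\<in>A. \<bar>(v i - c) * \<mu> i\<bar>)"
    by (rule sum_abs)
  also have "\<dots> = (\<Sum>i\<in>A. \<bar>v i - c\<bar> * \<mu> i)"
    using assms(2) by (intro sum.cong) (auto simp: abs_mult)
  also have "\<dots> \<le> (\<Sum>i\<in>A. \<delta> * \<mu> i)"
    using assms(2,4) by (intro sum_mono mult_right_mono) auto
  finally show ?thesis
    using assms(3) by (simp add: sum_distrib_left[symmetric] abs_le_iff field_simps)
qed

lemma recalibrated_column:
  fixes z y s :: "'r \<Rightarrow> real"
  assumes R: "finite R" and z: "\<forall>r\<in>R. 0 \<le> z r" and s: "\<forall>r\<in>R. s r \<in> {0..1}"
    and a: "a \<in> {0..1}" and y: "(\<Sum>r\<in>R. (s r - a) * y r) = 0"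
  obtains b where "b \<in> {0..1}" "(\<Sum>r\<in>R. (s r - b) * z r) = 0"
    "(\<Sum>r\<in>R. z r) * \<bar>a - b\<bar> \<le> (\<Sum>r\<in>R. \<bar>z r - y r\<bar>)"
proof (cases "(\<Sum>r\<in>R. z r) = 0")
  case True
  then have "\<forall>r\<in>R. z r = 0" using R z by (simp add: sum_nonneg_eq_0_iff)
  then show ?thesis using that[of a] a by (simp add: sum_nonneg)
next
  case False
  define b where "b = (\<Sum>r\<in>R. s r * z r) / (\<Sum>r\<in>R. z r)"
  have pos: "(\<Sum>r\<in>R. z r) > 0" using False z by (simp add: less_le sum_nonneg)
  have "\<forall>r\<in>R. \<bar>s r - 1 / 2\<bar> \<le> 1 / 2" using s by (auto split: abs_split)
  then have "\<bar>b - 1 / 2\<bar> \<le> 1 / 2"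
    unfolding b_def by (rule weighted_mean_close[OF R z pos])
  then have "b \<in> {0..1}" unfolding abs_le_iff by simp
  moreover have sum_b: "(\<Sum>r\<in>R. (s r - b) * z r) = 0"
  proof -
    have "(\<Sum>r\<in>R. (s r - b) * z r) = (\<Sum>r\<in>R. s r * z r) - b * (\<Sum>r\<in>R. z r)"
      by (simp add: left_diff_distrib sum_subtractf sum_distrib_left mult.assoc)
    then show ?thesis using pos by (simp add: b_def)
  qed
  moreover have "(\<Sum>r\<in>R. z r) * \<bar>a - b\<bar> \<le> (\<Sum>r\<in>R. \<bar>z r - y r\<bar>)"
  proof -
    have "(\<Sum>r\<in>R. z r) * \<bar>a - b\<bar> = \<bar>(\<Sum>r\<in>R. (s r - b) * z r) + (b - a) * (\<Sum>r\<in>R. z r)\<bar>"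
      using sum_b pos by (simp add: abs_mult abs_minus_commute)
    also have "\<dots> = \<bar>\<Sum>r\<in>R. (s r - a) * z r\<bar>"
      by (simp add: sum_distrib_left sum.distrib[symmetric] algebra_simps)
    also have "\<dots> = \<bar>\<Sum>r\<in>R. (s r - a) * (z r - y r)\<bar>"
      using y by (simp add: right_diff_distrib sum_subtractf)
    also have "\<dots> \<le> (\<Sum>r\<in>R. \<bar>s r - a\<bar> * \<bar>z r - y r\<bar>)"
      using sum_abs[of "\<lambda>r. (s r - a) * (z r - y r)" R] by (simp add: abs_mult)
    also have "\<dots> \<le> (\<Sum>r\<in>R. \<bar>z r - y r\<bar>)"
      using s a by (intro sum_mono mult_left_le_one_le) auto
    finally show ?thesis .
  qed
  ultimately show ?thesis using that by blast
qed

definition weighted_mean :: "(real \<Rightarrow> real) \<Rightarrow> real set \<Rightarrow> real" where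
  "weighted_mean \<mu> A = (\<Sum>\<alpha>\<in>A. \<alpha> * \<mu> \<alpha>) / (\<Sum>\<alpha>\<in>A. \<mu> \<alpha>)"

lemma weighted_mean_balance:
  assumes "finite A" "\<forall>\<alpha>\<in>A. 0 \<le> \<mu> \<alpha>"
  shows "(\<Sum>\<alpha>\<in>A. \<alpha> * \<mu> \<alpha>) = weighted_mean \<mu> A * (\<Sum>\<alpha>\<in>A. \<mu> \<alpha>)"
proof (cases "(\<Sum>\<alpha>\<in>A. \<mu> \<alpha>) = 0")
  case True
  then have "\<forall>\<alpha>\<in>A. \<mu> \<alpha> = 0" using assms by (simp add: sum_nonneg_eq_0_iff)
  then show ?thesis using True by simp
qed (simp add: weighted_mean_def)

lemma weighted_mean_in_unit:
  assumes "finite A" "A \<subseteq> {0..1}" "\<forall>\<alpha>\<in>A. 0 \<le> \<mu> \<alpha>"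
  shows "weighted_mean \<mu> A \<in> {0..1}"
proof (cases "(\<Sum>\<alpha>\<in>A. \<mu> \<alpha>) = 0")
  case False
  then have "(\<Sum>\<alpha>\<in>A. \<mu> \<alpha>) > 0" using assms(3) by (simp add: less_le sum_nonneg)
  moreover have "\<forall>\<alpha>\<in>A. \<bar>\<alpha> - 1 / 2\<bar> \<le> 1 / 2" using assms(2) by (auto split: abs_split)
  ultimately have "\<bar>weighted_mean \<mu> A - 1 / 2\<bar> \<le> 1 / 2"
    unfolding weighted_mean_def using assms(1,3) by (intro weighted_mean_close) auto
  then show ?thesis unfolding abs_le_iff by simp
qed (simp add: weighted_mean_def)

lemma weighted_mean_near_member:
  assumes "finite A" "\<forall>\<alpha>'\<in>A. 0 \<le> \<mu> \<alpha>'" "\<alpha> \<in> A" "0 < \<mu> \<alpha>" "\<forall>\<alpha>'\<in>A. \<bar>\<alpha>' - \<alpha>\<bar> \<le> \<delta>"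
  shows "\<bar>\<alpha> - weighted_mean \<mu> A\<bar> \<le> \<delta>"
proof -
  have "\<mu> \<alpha> \<le> (\<Sum>\<alpha>'\<in>A. \<mu> \<alpha>')" using assms(1-3) by (intro member_le_sum) auto
  then have "\<bar>weighted_mean \<mu> A - \<alpha>\<bar> \<le> \<delta>"
    unfolding weighted_mean_def using assms by (intro weighted_mean_close) auto
  then show ?thesis by (simp add: abs_minus_commute)
qed

lemma sum_abs_le_of_sum_zero:
  fixes d :: "'a \<Rightarrow> real"
  assumes "finite S" "S \<noteq> {}" "sum d S = 0" "\<forall>j\<in>S. \<bar>d j\<bar> \<le> 1"
  shows "(\<Sum>j\<in>S. \<bar>d j\<bar>) \<le> 2 * (real (card S) - 1)"
proof (cases "card S = 1")
  case True
  then obtain j0 where "S = {j0}" by (rule card_1_singletonE)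
  then show ?thesis using assms(3) by simp
next
  case False
  moreover have "card S > 0" using assms(1,2) by (simp add: card_gt_0_iff)
  ultimately have "card S \<ge> 2" by linarith
  have "(\<Sum>j\<in>S. \<bar>d j\<bar>) \<le> real (card S)"
    using sum_bounded_above[of S "\<lambda>j. \<bar>d j\<bar>" 1] assms(4) by simp
  with \<open>card S \<ge> 2\<close> show ?thesis by simp
qed

lemma prefix_floor_rounding:
  fixes w :: "nat \<Rightarrow> real"
  assumes nonneg: "\<forall>j<k. 0 \<le> w j" and total: "(\<Sum>j<k. w j) = real N"
  obtains z :: "nat \<Rightarrow> nat" where "(\<Sum>j<k. z j) = N"
    "\<forall>j<k. w j = 0 \<longrightarrow> z j = 0" "\<forall>j<k. \<bar>real (z j) - w j\<bar> < 1"
proof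
  define P where "P j = (\<Sum>i<j. w i)" for j
  define z where "z j = nat (\<lfloor>P (Suc j)\<rfloor> - \<lfloor>P j\<rfloor>)" for j
  have z: "real (z j) = of_int \<lfloor>P (Suc j)\<rfloor> - of_int \<lfloor>P j\<rfloor>" if "j < k" for j
  proof -
    have "P j \<le> P (Suc j)" using nonneg that by (simp add: P_def)
    then show ?thesis by (simp add: z_def floor_mono)
  qed
  have "real (\<Sum>j<k. z j) = (\<Sum>j<k. of_int \<lfloor>P (Suc j)\<rfloor> - of_int \<lfloor>P j\<rfloor>)"
    by (simp add: z)
  also have "\<dots> = real N"
    by (subst sum_lessThan_telescope) (simp add: P_def total)
  finally show "(\<Sum>j<k. z j) = N" by (simp only: of_nat_eq_iff)
  show "\<forall>j<k. w j = 0 \<longrightarrow> z j = 0" by (simp add: z_def P_def)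
  show "\<forall>j<k. \<bar>real (z j) - w j\<bar> < 1"
  proof (intro allI impI)
    fix j assume "j < k"
    have "P (Suc j) = P j + w j" by (simp add: P_def)
    moreover have "of_int \<lfloor>P (Suc j)\<rfloor> \<le> P (Suc j)" "P (Suc j) < of_int \<lfloor>P (Suc j)\<rfloor> + 1"
      "of_int \<lfloor>P j\<rfloor> \<le> P j" "P j < of_int \<lfloor>P j\<rfloor> + 1" by linarith+
    ultimately show "\<bar>real (z j) - w j\<bar> < 1" using z[OF \<open>j < k\<close>] by linarith
  qed
qed

lemma integral_rounding:
  fixes w :: "nat \<Rightarrow> real"
  assumes nonneg: "\<forall>j<k. 0 \<le> w j" and total: "(\<Sum>j<k. w j) = real N" and "N > 0"
  obtains z :: "nat \<Rightarrow> nat" where "(\<Sum>j<k. z j) = N"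
    "(\<Sum>j<k. \<bar>real (z j) - w j\<bar>) \<le> 2 * (real (card {j. j < k \<and> w j \<noteq> 0}) - 1)"
proof -
  obtain z :: "nat \<Rightarrow> nat" where z: "(\<Sum>j<k. z j) = N"
    and z0: "\<forall>j<k. w j = 0 \<longrightarrow> z j = 0" and close: "\<forall>j<k. \<bar>real (z j) - w j\<bar> < 1"
    using prefix_floor_rounding[OF nonneg total] by blast
  define S where "S = {j. j < k \<and> w j \<noteq> 0}"
  have off_S: "\<forall>j\<in>{..<k} - S. real (z j) - w j = 0" using z0 by (simp add: S_def)
  have "S \<noteq> {}"
  proof
    assume "S = {}"
    then have "(\<Sum>j<k. w j) = 0" by (intro sum.neutral) (auto simp: S_def)
    with total \<open>N > 0\<close> show False by simp
  qed
  have "(\<Sum>j<k. real (z j)) = real N" by (simp only: z[symmetric] of_nat_sum)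
  then have "(\<Sum>j<k. real (z j) - w j) = 0" using total by (simp add: sum_subtractf)
  then have "(\<Sum>j\<in>S. real (z j) - w j) = 0"
    using off_S by (simp add: sum.mono_neutral_right[of "{..<k}" S] S_def subset_eq)
  then have "(\<Sum>j\<in>S. \<bar>real (z j) - w j\<bar>) \<le> 2 * (real (card S) - 1)"
    using \<open>S \<noteq> {}\<close> close by (intro sum_abs_le_of_sum_zero) (auto simp: S_def less_imp_le)
  moreover have "(\<Sum>j<k. \<bar>real (z j) - w j\<bar>) = (\<Sum>j\<in>S. \<bar>real (z j) - w j\<bar>)"
    using off_S by (intro sum.mono_neutral_right) (auto simp: S_def)
  ultimately show ?thesis using that z by (simp add: S_def)
qed

lemma exists_map_with_fibre_cards:
  fixes k :: nat
  assumes "finite A" "card A = (\<Sum>j<k. m j)"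
  shows "\<exists>f. (\<forall>a\<in>A. f a < k) \<and> (\<forall>j<k. card {a\<in>A. f a = j} = m j)"
  using assms
proof (induction k arbitrary: A)
  case 0
  then show ?case by simp
next
  case (Suc k)
  then obtain B where B: "B \<subseteq> A" "card B = m k"
    by (metis obtain_subset_with_card_n le_add2 sum.lessThan_Suc)
  moreover have "card (A - B) = (\<Sum>j<k. m j)"
    using B Suc.prems by (simp add: card_Diff_subset finite_subset)
  ultimately obtain f where f: "\<forall>a\<in>A - B. f a < k" "\<forall>j<k. card {a\<in>A - B. f a = j} = m j"
    using Suc.IH[of "A - B"] Suc.prems(1) by blast
  define f' where "f' a = (if a \<in> B then k else f a)" for a
  have "{a\<in>A. f' a = j} = {a\<in>A - B. f a = j}" if "j < k" for j
    using that by (auto simp: f'_def)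
  moreover have "{a\<in>A. f' a = k} = B"
    using f(1) B(1) by (auto simp: f'_def)
  ultimately have "\<forall>j<Suc k. card {a\<in>A. f' a = j} = m j"
    using f B by (auto simp: less_Suc_eq)
  moreover have "\<forall>a\<in>A. f' a < Suc k"
    unfolding f'_def using f(1) by (auto intro: less_SucI)
  ultimately show ?case by blast
qed

section \<open>Fractional calibrated plans\<close>

locale calibration_plans =
  fixes T :: nat and x p :: "nat \<Rightarrow> real" and k :: nat
  assumes binary: "binary_vec T x" and unit: "unit_vec T p"
begin

definition obs :: "nat \<Rightarrow> real \<times> real" where
  "obs t = (p t, x t)"

definition observed :: "(real \<times> real) set" where
  "observed = obs ` {..<T}"

definition obs_count :: "real \<times> real \<Rightarrow> nat" where
  "obs_count r = card {t. t < T \<and> obs t = r}"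

text \<open>Feasible plans are the linear-programming relaxation of calibrated predictions:
  \<open>y r j\<close> is the share of the \<open>obs_count r\<close> time steps with observation \<open>r = (p\<^sub>t, x\<^sub>t)\<close> that
  is sent to bin \<open>j\<close>, which predicts \<open>a j\<close>.\<close>

definition feasible :: "(nat \<Rightarrow> real) \<Rightarrow> (real \<times> real \<Rightarrow> nat \<Rightarrow> real) \<Rightarrow> bool" where
  "feasible a y \<longleftrightarrow> (\<forall>j<k. a j \<in> {0..1}) \<and> (\<forall>r\<in>observed. \<forall>j<k. 0 \<le> y r j) \<and>
     (\<forall>r\<in>observed. (\<Sum>j<k. y r j) = real (obs_count r)) \<and>
     (\<forall>j<k. (\<Sum>r\<in>observed. (snd r - a j) * y r j) = 0)"

definition cost :: "(nat \<Rightarrow> real) \<Rightarrow> (real \<times> real \<Rightarrow> nat \<Rightarrow> real) \<Rightarrow> real" where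
  "cost a y = (\<Sum>r\<in>observed. \<Sum>j<k. y r j * \<bar>fst r - a j\<bar>)"

definition support :: "(real \<times> real \<Rightarrow> nat \<Rightarrow> real) \<Rightarrow> ((real \<times> real) \<times> nat) set" where
  "support y = {(r, j). r \<in> observed \<and> j < k \<and> y r j \<noteq> 0}"

definition used_bins :: "(real \<times> real \<Rightarrow> nat \<Rightarrow> real) \<Rightarrow> nat set" where
  "used_bins y = {j. j < k \<and> (\<exists>r\<in>observed. y r j \<noteq> 0)}"

lemma finite_observed: "finite observed"
  by (simp add: observed_def)

lemma support_subset: "support y \<subseteq> observed \<times> {..<k}"
  by (auto simp: support_def)

lemma finite_support: "finite (support y)"
  using finite_subset[OF support_subset] finite_observed by blast

lemma finite_used_bins: "finite (used_bins y)"
  by (simp add: used_bins_def)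

lemma obs_in_observed: "t < T \<Longrightarrow> obs t \<in> observed"
  by (simp add: observed_def)

lemma observed_memberD:
  assumes "r \<in> observed"
  shows "fst r \<in> {0..1}" "snd r \<in> {0, 1}" "obs_count r > 0"
proof -
  obtain t where t: "t < T" "r = obs t" using assms by (auto simp: observed_def)
  then show "fst r \<in> {0..1}" "snd r \<in> {0, 1}"
    using binary unit by (auto simp: obs_def binary_vec_def unit_vec_def)
  have "t \<in> {t. t < T \<and> obs t = r}" using t by simp
  then show "obs_count r > 0"
    unfolding obs_count_def by (metis card_gt_0_iff empty_iff finite_Collect_less_nat finite_Collect_conjI)
qed

lemma sum_observed_classes: "(\<Sum>r\<in>observed. \<Sum>t | t < T \<and> obs t = r. f t) = (\<Sum>t<T. f t)"
  using sum.group[of "{..<T}" observed obs f] by (simp add: finite_observed observed_def)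

lemma sum_support:
  fixes d G :: "real \<times> real \<Rightarrow> nat \<Rightarrow> real"
  assumes "\<forall>r j. (r, j) \<notin> support y \<longrightarrow> d r j = 0"
  shows "(\<Sum>(r, j)\<in>support y. G r j * d r j) = (\<Sum>r\<in>observed. \<Sum>j<k. G r j * d r j)"
proof -
  have "(\<Sum>(r, j)\<in>support y. G r j * d r j) = (\<Sum>(r, j)\<in>observed \<times> {..<k}. G r j * d r j)"
    using assms support_subset by (intro sum.mono_neutral_left) (auto simp: finite_observed)
  then show ?thesis by (simp add: sum.cartesian_product)
qed

lemma card_support_by_rows: "card (support y) = (\<Sum>r\<in>observed. card {j. j < k \<and> y r j \<noteq> 0})"
proof -
  have "support y = Sigma observed (\<lambda>r. {j. j < k \<and> y r j \<noteq> 0})" by (auto simp: support_def)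
  then show ?thesis by (simp add: finite_observed)
qed

lemma card_support_by_columns:
  "card (support y) = (\<Sum>j\<in>used_bins y. card {r\<in>observed. y r j \<noteq> 0})"
proof -
  have "support y = (\<lambda>(j, r). (r, j)) ` Sigma (used_bins y) (\<lambda>j. {r\<in>observed. y r j \<noteq> 0})"
    by (auto simp: support_def used_bins_def image_iff)
  moreover have "inj_on (\<lambda>(j, r). (r, j)) (Sigma (used_bins y) (\<lambda>j. {r\<in>observed. y r j \<noteq> 0}))"
    by (auto simp: inj_on_def)
  ultimately show ?thesis
    by (simp add: card_image finite_used_bins finite_observed)
qed

section \<open>Basic plans\<close>

lemma balanced_direction_exists:
  assumes "card (support y) > card observed + card (used_bins y)"
  obtains d where "\<forall>r j. (r, j) \<notin> support y \<longrightarrow> d r j = 0" "\<exists>(r, j)\<in>support y. d r j \<noteq> 0"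
    "\<forall>r\<in>observed. (\<Sum>j<k. d r j) = 0" "\<forall>j<k. (\<Sum>r\<in>observed. (snd r - a j) * d r j) = 0"
proof -
  define I where "I = Inl ` observed \<union> Inr ` used_bins y"
  define F :: "(real \<times> real) + nat \<Rightarrow> (real \<times> real) \<times> nat \<Rightarrow> real" where
    "F i = (\<lambda>(r, j). case i of Inl r' \<Rightarrow> of_bool (r = r') | Inr j' \<Rightarrow> of_bool (j = j') * (snd r - a j))"
    for i
  have "card I = card observed + card (used_bins y)"
    unfolding I_def by (subst card_Un_disjoint) (auto simp: finite_observed finite_used_bins card_image)
  then obtain d where d0: "\<forall>z. z \<notin> support y \<longrightarrow> d z = 0" and nonzero: "\<exists>z\<in>support y. d z \<noteq> 0"
    and eqs: "\<forall>i\<in>I. (\<Sum>z\<in>support y. F i z * d z) = 0"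
    using underdetermined_homogeneous_system[of I "support y" F] assms finite_support
    by (auto simp: I_def finite_observed finite_used_bins)
  define d' where "d' r j = d (r, j)" for r j
  have d'0: "\<forall>r j. (r, j) \<notin> support y \<longrightarrow> d' r j = 0" using d0 by (simp add: d'_def)
  have equation: "(\<Sum>r\<in>observed. \<Sum>j<k. F i (r, j) * d' r j) = 0" if "i \<in> I" for i
    using eqs that sum_support[OF d'0, of "\<lambda>r j. F i (r, j)"] by (simp add: d'_def split_def)
  have "(\<Sum>j<k. d' r j) = 0" if "r \<in> observed" for r
  proof -
    have "(\<Sum>r'\<in>observed. \<Sum>j<k. F (Inl r) (r', j) * d' r' j) =
        (\<Sum>r'\<in>observed. if r' = r then \<Sum>j<k. d' r j else 0)"
      by (intro sum.cong) (auto simp: F_def)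
    then show ?thesis using equation[of "Inl r"] that finite_observed by (simp add: I_def)
  qed
  moreover have "(\<Sum>r\<in>observed. (snd r - a j) * d' r j) = 0" if "j < k" for j
  proof (cases "j \<in> used_bins y")
    case True
    have "(\<Sum>j'<k. F (Inr j) (r, j') * d' r j') = (\<Sum>j'<k. if j' = j then (snd r - a j) * d' r j else 0)"
      for r by (intro sum.cong) (auto simp: F_def)
    then show ?thesis using equation[of "Inr j"] True that by (simp add: I_def)
  next
    case False
    then have "\<forall>r\<in>observed. d' r j = 0" using d'0 that by (auto simp: support_def used_bins_def)
    then show ?thesis by simp
  qed
  moreover have "\<exists>(r, j)\<in>support y. d' r j \<noteq> 0" using nonzero by (auto simp: d'_def)
  ultimately show ?thesis using that d'0 by blast
qed

lemma cost_nonincreasing_direction: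
  assumes "card (support y) > card observed + card (used_bins y)"
  obtains e where "\<forall>r j. (r, j) \<notin> support y \<longrightarrow> e r j = 0"
    "\<exists>(r, j)\<in>support y. e r j < 0"
    "\<forall>r\<in>observed. (\<Sum>j<k. e r j) = 0"
    "\<forall>j<k. (\<Sum>r\<in>observed. (snd r - a j) * e r j) = 0"
    "(\<Sum>r\<in>observed. \<Sum>j<k. e r j * \<bar>fst r - a j\<bar>) \<le> 0"
proof -
  obtain d where d0: "\<forall>r j. (r, j) \<notin> support y \<longrightarrow> d r j = 0"
    and nonzero: "\<exists>(r, j)\<in>support y. d r j \<noteq> 0"
    and rows: "\<forall>r\<in>observed. (\<Sum>j<k. d r j) = 0"
    and columns: "\<forall>j<k. (\<Sum>r\<in>observed. (snd r - a j) * d r j) = 0"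
    using balanced_direction_exists[OF assms] by blast
  define \<sigma> where "\<sigma> = (if (\<Sum>r\<in>observed. \<Sum>j<k. d r j * \<bar>fst r - a j\<bar>) \<le> 0 then 1 else - 1 :: real)"
  define e where "e r j = \<sigma> * d r j" for r j
  have e0: "\<forall>r j. (r, j) \<notin> support y \<longrightarrow> e r j = 0" using d0 by (simp add: e_def)
  have e_rows: "\<forall>r\<in>observed. (\<Sum>j<k. e r j) = 0"
    using rows by (simp add: e_def sum_distrib_left[symmetric])
  have "\<forall>j<k. (\<Sum>r\<in>observed. (snd r - a j) * e r j) = 0"
    using columns by (simp add: e_def mult.left_commute[of _ \<sigma>] sum_distrib_left[symmetric])
  moreover have "(\<Sum>r\<in>observed. \<Sum>j<k. e r j * \<bar>fst r - a j\<bar>) \<le> 0"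
    by (simp add: e_def \<sigma>_def mult.assoc sum_distrib_left[symmetric] sum_negf)
  moreover have "\<exists>(r, j)\<in>support y. e r j < 0"
  proof (rule ccontr)
    assume "\<not> ?thesis"
    then have nonneg: "0 \<le> e r j" if "r \<in> observed" "j < k" for r j
      using e0[rule_format, of r j] by (cases "(r, j) \<in> support y") (auto simp: not_less)
    have "e r j = 0" if "r \<in> observed" "j < k" for r j
      using e_rows that nonneg sum_nonneg_eq_0_iff[of "{..<k}" "e r"] by auto
    moreover have "\<sigma> \<noteq> 0" by (simp add: \<sigma>_def)
    ultimately show False using nonzero by (auto simp: e_def support_def)
  qed
  ultimately show ?thesis using that e0 e_rows by blast
qed

lemma feasible_shrink_support:
  assumes y: "feasible a y" and big: "card (support y) > card observed + card (used_bins y)"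
  obtains y' where "feasible a y'" "cost a y' \<le> cost a y" "card (support y') < card (support y)"
proof -
  obtain e where e0: "\<forall>r j. (r, j) \<notin> support y \<longrightarrow> e r j = 0"
    and neg: "\<exists>(r, j)\<in>support y. e r j < 0"
    and rows: "\<forall>r\<in>observed. (\<Sum>j<k. e r j) = 0"
    and columns: "\<forall>j<k. (\<Sum>r\<in>observed. (snd r - a j) * e r j) = 0"
    and cost_e: "(\<Sum>r\<in>observed. \<Sum>j<k. e r j * \<bar>fst r - a j\<bar>) \<le> 0"
    using cost_nonincreasing_direction[OF big] by blast
  define N where "N = {(r, j) \<in> support y. e r j < 0}"
  have "finite N" by (rule finite_subset[OF _ finite_support]) (auto simp: N_def)
  moreover have "N \<noteq> {}" using neg by (auto simp: N_def)
  moreover have "\<forall>(r, j)\<in>N. 0 \<le> y r j \<and> e r j < 0"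
    using y by (auto simp: N_def support_def feasible_def)
  ultimately obtain s where s: "0 \<le> s" "\<forall>(r, j)\<in>N. 0 \<le> y r j + s * e r j"
    and hit: "\<exists>(r, j)\<in>N. y r j + s * e r j = 0"
    using ratio_test[of N "\<lambda>(r, j). y r j" "\<lambda>(r, j). e r j"] by (auto simp: split_def)
  define y' where "y' r j = y r j + s * e r j" for r j
  have "0 \<le> y' r j" if "r \<in> observed" "j < k" for r j
  proof (cases "(r, j) \<in> N")
    case True
    then show ?thesis using s by (auto simp: y'_def)
  next
    case False
    then have "0 \<le> e r j" using e0[rule_format, of r j] by (auto simp: N_def not_less)
    then show ?thesis using y that s by (simp add: y'_def feasible_def)
  qed
  moreover have "(\<Sum>j<k. y' r j) = real (obs_count r)" if "r \<in> observed" for r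
    using y rows that by (simp add: y'_def feasible_def sum.distrib sum_distrib_left[symmetric])
  moreover have "(\<Sum>r\<in>observed. (snd r - a j) * y' r j) = 0" if "j < k" for j
    using y columns that
    by (simp add: y'_def feasible_def distrib_left sum.distrib mult.left_commute[of _ s]
        sum_distrib_left[symmetric])
  ultimately have "feasible a y'" using y by (simp add: feasible_def)
  moreover have "cost a y' \<le> cost a y"
    using cost_e s(1)
    by (simp add: cost_def y'_def distrib_right sum.distrib mult.assoc sum_distrib_left[symmetric]
        mult_nonneg_nonpos)
  moreover have "support y' \<subset> support y"
  proof -
    have "support y' \<subseteq> support y" using e0 by (auto simp: support_def y'_def)
    moreover obtain r j where "(r, j) \<in> N" "y' r j = 0" using hit by (auto simp: y'_def)
    then have "(r, j) \<in> support y - support y'" by (auto simp: N_def support_def)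
    ultimately show ?thesis by blast
  qed
  then have "card (support y') < card (support y)"
    using finite_support by (rule psubset_card_mono[rotated])
  ultimately show ?thesis using that by blast
qed

lemma exists_basic_feasible:
  assumes "feasible a y"
  obtains y' where "feasible a y'" "cost a y' \<le> cost a y"
    "card (support y') \<le> card observed + card (used_bins y')"
  using assms
proof (induction "card (support y)" arbitrary: y thesis rule: less_induct)
  case less
  show ?case
  proof (cases "card (support y) \<le> card observed + card (used_bins y)")
    case True
    then show ?thesis using less.prems by blast
  next
    case False
    then obtain y1 where "feasible a y1" "cost a y1 \<le> cost a y" "card (support y1) < card (support y)"
      using feasible_shrink_support[OF less.prems(2)] by auto
    with less.hyps[of y1] less.prems(1) show ?thesis by force
  qed
qed

section \<open>Rounding plans to calibrated predictions\<close>

lemma sum_by_bins: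
  assumes "\<forall>t<T. bin t < k" and "\<forall>r\<in>observed. \<forall>j<k. card {t. t < T \<and> obs t = r \<and> bin t = j} = m r j"
  shows "(\<Sum>t<T. h (obs t) (bin t)) = (\<Sum>r\<in>observed. \<Sum>j<k. real (m r j) * h r j)"
proof -
  have "(\<Sum>t<T. h (obs t) (bin t)) =
      (\<Sum>z\<in>observed \<times> {..<k}. \<Sum>t | t < T \<and> (obs t, bin t) = z. h (obs t) (bin t))"
    using sum.group[of "{..<T}" "observed \<times> {..<k}" "\<lambda>t. (obs t, bin t)" "\<lambda>t. h (obs t) (bin t)"] assms(1)
    by (simp add: finite_observed obs_in_observed image_subset_iff)
  also have "\<dots> = (\<Sum>(r, j)\<in>observed \<times> {..<k}. real (card {t. t < T \<and> obs t = r \<and> bin t = j}) * h r j)"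
  proof (intro sum.cong refl, clarify)
    fix r j
    have "(\<Sum>t | t < T \<and> (obs t, bin t) = (r, j). h (obs t) (bin t)) =
        (\<Sum>t | t < T \<and> obs t = r \<and> bin t = j. h r j)"
      by (intro sum.cong) auto
    then show "(\<Sum>t | t < T \<and> (obs t, bin t) = (r, j). h (obs t) (bin t)) =
        real (card {t. t < T \<and> obs t = r \<and> bin t = j}) * h r j" by simp
  qed
  also have "\<dots> = (\<Sum>r\<in>observed. \<Sum>j<k. real (m r j) * h r j)"
    using assms(2) by (simp add: sum.cartesian_product[symmetric])
  finally show ?thesis .
qed

lemma exists_bin_assignment:
  assumes "\<forall>r\<in>observed. (\<Sum>j<k. m r j) = obs_count r"
  obtains bin where "\<forall>t<T. bin t < k"
    "\<forall>r\<in>observed. \<forall>j<k. card {t. t < T \<and> obs t = r \<and> bin t = j} = m r j"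
proof -
  have "\<forall>r\<in>observed. \<exists>f. (\<forall>t\<in>{t. t < T \<and> obs t = r}. f t < k) \<and>
      (\<forall>j<k. card {t \<in> {t. t < T \<and> obs t = r}. f t = j} = m r j)"
  proof
    fix r assume "r \<in> observed"
    then have "card {t. t < T \<and> obs t = r} = (\<Sum>j<k. m r j)" using assms by (simp add: obs_count_def)
    then show "\<exists>f. (\<forall>t\<in>{t. t < T \<and> obs t = r}. f t < k) \<and>
        (\<forall>j<k. card {t \<in> {t. t < T \<and> obs t = r}. f t = j} = m r j)"
      by (intro exists_map_with_fibre_cards) simp_all
  qed
  from bchoice[OF this] obtain f where f: "\<forall>r\<in>observed. \<forall>t. t < T \<and> obs t = r \<longrightarrow> f r t < k"
      "\<forall>r\<in>observed. \<forall>j<k. card {t. t < T \<and> obs t = r \<and> f r t = j} = m r j"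
    by (auto simp: conj_assoc)
  define bin where "bin t = f (obs t) t" for t
  show ?thesis
  proof (rule that)
    show "\<forall>t<T. bin t < k" using f(1) obs_in_observed by (simp add: bin_def)
    show "\<forall>r\<in>observed. \<forall>j<k. card {t. t < T \<and> obs t = r \<and> bin t = j} = m r j"
    proof (intro ballI allI impI)
      fix r j assume "r \<in> observed" "j < k"
      have "{t. t < T \<and> obs t = r \<and> bin t = j} = {t. t < T \<and> obs t = r \<and> f r t = j}"
        by (auto simp: bin_def)
      then show "card {t. t < T \<and> obs t = r \<and> bin t = j} = m r j"
        using f(2) \<open>r \<in> observed\<close> \<open>j < k\<close> by simp
    qed
  qed
qed

lemma calibrated_of_integral_plan:
  assumes plan: "feasible b (\<lambda>r j. real (m r j))"
  obtains q where "q \<in> calibrated_set T x" "l1_dist T p q = cost b (\<lambda>r j. real (m r j))"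
proof -
  have "\<forall>r\<in>observed. (\<Sum>j<k. m r j) = obs_count r"
    using plan by (simp add: feasible_def flip: of_nat_sum)
  then obtain bin where bin: "\<forall>t<T. bin t < k"
    and counts: "\<forall>r\<in>observed. \<forall>j<k. card {t. t < T \<and> obs t = r \<and> bin t = j} = m r j"
    by (rule exists_bin_assignment)
  define q where "q t = b (bin t)" for t
  have "unit_vec T q" using plan bin by (simp add: unit_vec_def q_def feasible_def)
  moreover have "(\<Sum>t<T. (x t - q t) * of_bool (q t = \<alpha>)) = 0" for \<alpha>
  proof -
    have "(\<Sum>t<T. (x t - q t) * of_bool (q t = \<alpha>)) =
        (\<Sum>r\<in>observed. \<Sum>j<k. real (m r j) * ((snd r - b j) * of_bool (b j = \<alpha>)))"
      using sum_by_bins[OF bin counts, of "\<lambda>r j. (snd r - b j) * of_bool (b j = \<alpha>)"]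
      by (simp add: q_def obs_def)
    also have "\<dots> = (\<Sum>j<k. of_bool (b j = \<alpha>) * (\<Sum>r\<in>observed. (snd r - b j) * real (m r j)))"
      by (subst sum.swap) (simp add: sum_distrib_left algebra_simps)
    also have "\<dots> = 0" using plan by (simp add: feasible_def)
    finally show ?thesis .
  qed
  ultimately have "q \<in> calibrated_set T x" by (simp add: calibrated_set_def of_bool_def)
  moreover have "l1_dist T p q = cost b (\<lambda>r j. real (m r j))"
    using sum_by_bins[OF bin counts, of "\<lambda>r j. \<bar>fst r - b j\<bar>"]
    by (simp add: l1_dist_def cost_def q_def obs_def)
  ultimately show ?thesis using that by blast
qed

lemma recalibrate:
  assumes y: "feasible a y" and z: "\<forall>r\<in>observed. \<forall>j<k. 0 \<le> z r j"
    and rows: "\<forall>r\<in>observed. (\<Sum>j<k. z r j) = real (obs_count r)"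
  obtains b where "feasible b z" "cost b z \<le> cost a y + 2 * (\<Sum>r\<in>observed. \<Sum>j<k. \<bar>z r j - y r j\<bar>)"
proof -
  have "\<exists>b. b \<in> {0..1} \<and> (\<Sum>r\<in>observed. (snd r - b) * z r j) = 0 \<and>
      (\<Sum>r\<in>observed. z r j) * \<bar>a j - b\<bar> \<le> (\<Sum>r\<in>observed. \<bar>z r j - y r j\<bar>)" if "j \<in> {..<k}" for j
  proof -
    have "\<forall>r\<in>observed. snd r \<in> {0..1}" using observed_memberD(2) by fastforce
    moreover have "\<forall>r\<in>observed. 0 \<le> z r j" "a j \<in> {0..1}" "(\<Sum>r\<in>observed. (snd r - a j) * y r j) = 0"
      using z y that by (auto simp: feasible_def)
    ultimately obtain b where "b \<in> {0..1}" "(\<Sum>r\<in>observed. (snd r - b) * z r j) = 0"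
      "(\<Sum>r\<in>observed. z r j) * \<bar>a j - b\<bar> \<le> (\<Sum>r\<in>observed. \<bar>z r j - y r j\<bar>)"
      using recalibrated_column[OF finite_observed, of "\<lambda>r. z r j" snd "a j" "\<lambda>r. y r j"] by blast
    then show ?thesis by blast
  qed
  from bchoice[OF ballI[OF this]] obtain b
    where "\<forall>j\<in>{..<k}. b j \<in> {0..1} \<and> (\<Sum>r\<in>observed. (snd r - b j) * z r j) = 0 \<and>
      (\<Sum>r\<in>observed. z r j) * \<bar>a j - b j\<bar> \<le> (\<Sum>r\<in>observed. \<bar>z r j - y r j\<bar>)" ..
  then have b: "\<forall>j<k. b j \<in> {0..1}" "\<forall>j<k. (\<Sum>r\<in>observed. (snd r - b j) * z r j) = 0"
    and shift: "\<forall>j<k. (\<Sum>r\<in>observed. z r j) * \<bar>a j - b j\<bar> \<le> (\<Sum>r\<in>observed. \<bar>z r j - y r j\<bar>)"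
    by auto
  have "feasible b z" using b z rows by (simp add: feasible_def)
  have "z r j * \<bar>fst r - b j\<bar> \<le> y r j * \<bar>fst r - a j\<bar> + \<bar>z r j - y r j\<bar> + z r j * \<bar>a j - b j\<bar>"
    if "r \<in> observed" "j < k" for r j
  proof -
    have "\<bar>fst r - a j\<bar> \<le> 1" using observed_memberD(1)[OF that(1)] y that(2) by (auto simp: feasible_def)
    then have "\<bar>z r j - y r j\<bar> * \<bar>fst r - a j\<bar> \<le> \<bar>z r j - y r j\<bar>"
      by (intro mult_right_le_one_le) auto
    moreover have "(z r j - y r j) * \<bar>fst r - a j\<bar> \<le> \<bar>z r j - y r j\<bar> * \<bar>fst r - a j\<bar>"
      by (intro mult_right_mono) auto
    ultimately have "(z r j - y r j) * \<bar>fst r - a j\<bar> \<le> \<bar>z r j - y r j\<bar>" by linarith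
    have "\<bar>fst r - b j\<bar> \<le> \<bar>fst r - a j\<bar> + \<bar>a j - b j\<bar>" by linarith
    then have "z r j * \<bar>fst r - b j\<bar> \<le> z r j * \<bar>fst r - a j\<bar> + z r j * \<bar>a j - b j\<bar>"
      using z that by (metis distrib_left mult_left_mono)
    moreover note \<open>(z r j - y r j) * \<bar>fst r - a j\<bar> \<le> \<bar>z r j - y r j\<bar>\<close>
    ultimately show ?thesis by (simp add: left_diff_distrib)
  qed
  then have "cost b z \<le>
      (\<Sum>r\<in>observed. \<Sum>j<k. y r j * \<bar>fst r - a j\<bar> + \<bar>z r j - y r j\<bar> + z r j * \<bar>a j - b j\<bar>)"
    unfolding cost_def by (intro sum_mono) auto
  also have "\<dots> = cost a y + (\<Sum>r\<in>observed. \<Sum>j<k. \<bar>z r j - y r j\<bar>) +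
      (\<Sum>j<k. (\<Sum>r\<in>observed. z r j) * \<bar>a j - b j\<bar>)"
    by (simp add: cost_def sum.distrib sum_distrib_right sum.swap[of _ observed "{..<k}"])
  also have "(\<Sum>j<k. (\<Sum>r\<in>observed. z r j) * \<bar>a j - b j\<bar>) \<le> (\<Sum>j<k. \<Sum>r\<in>observed. \<bar>z r j - y r j\<bar>)"
    using shift by (intro sum_mono) auto
  also have "\<dots> = (\<Sum>r\<in>observed. \<Sum>j<k. \<bar>z r j - y r j\<bar>)"
    by (rule sum.swap)
  finally show ?thesis using that \<open>feasible b z\<close> by simp
qed

lemma round_plan:
  assumes y: "feasible a y"
  obtains m :: "real \<times> real \<Rightarrow> nat \<Rightarrow> nat" where "\<forall>r\<in>observed. (\<Sum>j<k. real (m r j)) = real (obs_count r)"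
    "(\<Sum>r\<in>observed. \<Sum>j<k. \<bar>real (m r j) - y r j\<bar>) \<le> 2 * (real (card (support y)) - real (card observed))"
proof -
  have "\<exists>z. (\<Sum>j<k. z j) = obs_count r \<and>
      (\<Sum>j<k. \<bar>real (z j) - y r j\<bar>) \<le> 2 * (real (card {j. j < k \<and> y r j \<noteq> 0}) - 1)"
    if "r \<in> observed" for r
  proof -
    have "\<forall>j<k. 0 \<le> y r j" "(\<Sum>j<k. y r j) = real (obs_count r)" using y that by (auto simp: feasible_def)
    from integral_rounding[OF this observed_memberD(3)[OF that]] show ?thesis by blast
  qed
  from bchoice[OF ballI[OF this]] obtain m where "\<forall>r\<in>observed. (\<Sum>j<k. m r j) = obs_count r \<and>
      (\<Sum>j<k. \<bar>real (m r j) - y r j\<bar>) \<le> 2 * (real (card {j. j < k \<and> y r j \<noteq> 0}) - 1)" ..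
  then have m: "\<forall>r\<in>observed. (\<Sum>j<k. m r j) = obs_count r"
    and loss: "\<forall>r\<in>observed. (\<Sum>j<k. \<bar>real (m r j) - y r j\<bar>) \<le> 2 * (real (card {j. j < k \<and> y r j \<noteq> 0}) - 1)"
    by auto
  have "\<forall>r\<in>observed. (\<Sum>j<k. real (m r j)) = real (obs_count r)" using m by (simp flip: of_nat_sum)
  moreover have "(\<Sum>r\<in>observed. \<Sum>j<k. \<bar>real (m r j) - y r j\<bar>) \<le>
      (\<Sum>r\<in>observed. 2 * (real (card {j. j < k \<and> y r j \<noteq> 0}) - 1))"
    using loss by (intro sum_mono) auto
  moreover have "(\<Sum>r\<in>observed. 2 * (real (card {j. j < k \<and> y r j \<noteq> 0}) - 1)) =
      2 * (real (card (support y)) - real (card observed))"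
    by (simp add: card_support_by_rows sum_subtractf sum_distrib_left)
  ultimately show ?thesis using that by simp
qed

lemma calibrated_near_plan:
  assumes y: "feasible a y"
  obtains q where "q \<in> calibrated_set T x"
    "l1_dist T p q \<le> cost a y + 4 * (real (card (support y)) - real (card observed))"
proof -
  obtain m where rows: "\<forall>r\<in>observed. (\<Sum>j<k. real (m r j)) = real (obs_count r)"
    and loss: "(\<Sum>r\<in>observed. \<Sum>j<k. \<bar>real (m r j) - y r j\<bar>) \<le>
      2 * (real (card (support y)) - real (card observed))"
    using round_plan[OF y] by blast
  obtain b where b: "feasible b (\<lambda>r j. real (m r j))"
    and cost_b: "cost b (\<lambda>r j. real (m r j)) \<le> cost a y + 2 * (\<Sum>r\<in>observed. \<Sum>j<k. \<bar>real (m r j) - y r j\<bar>)"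
    using recalibrate[OF y _ rows] by auto
  obtain q where "q \<in> calibrated_set T x" "l1_dist T p q = cost b (\<lambda>r j. real (m r j))"
    using calibrated_of_integral_plan[OF b] by blast
  with cost_b loss that show ?thesis by simp
qed

lemma used_bin_rows:
  assumes y: "feasible a y" and j: "j \<in> used_bins y" and "a j \<notin> {0, 1}"
  shows "card {r\<in>observed. y r j \<noteq> 0} \<ge> 2"
proof (rule ccontr)
  define R where "R = {r\<in>observed. y r j \<noteq> 0}"
  assume "\<not> card R \<ge> 2"
  moreover have "R \<noteq> {}" "finite R" using j finite_observed by (auto simp: R_def used_bins_def)
  ultimately have "card R = 1" by (metis One_nat_def card_0_eq less_2_cases not_le)
  then obtain r0 where R: "R = {r0}" by (rule card_1_singletonE)
  then have "r0 \<in> observed" "y r0 j \<noteq> 0" by (auto simp: R_def)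
  \<comment> \<open>A bin used by a single observation is calibrated only if it predicts that
    observation's outcome.\<close>
  have "(\<Sum>r\<in>observed. (snd r - a j) * y r j) = (\<Sum>r\<in>R. (snd r - a j) * y r j)"
    by (intro sum.mono_neutral_right finite_observed) (auto simp: R_def)
  then have "(snd r0 - a j) * y r0 j = 0" using y j R by (simp add: feasible_def used_bins_def)
  then have "a j = snd r0" using \<open>y r0 j \<noteq> 0\<close> by simp
  then show False using observed_memberD(2)[OF \<open>r0 \<in> observed\<close>] assms(3) by simp
qed

lemma card_used_bins_le:
  assumes y: "feasible a y" and inj: "inj_on a {..<k}"
    and basic: "card (support y) \<le> card observed + card (used_bins y)"
  shows "card (used_bins y) \<le> card observed + 2"
proof -
  define U where "U = used_bins y"
  define E where "E = {j\<in>U. a j \<in> {0, 1}}"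
  have "finite U" by (simp add: U_def finite_used_bins)
  have "card E \<le> card {0 :: real, 1}"
    using inj by (intro card_inj_on_le[of a]) (auto simp: E_def U_def used_bins_def intro: inj_on_subset)
  then have "card E \<le> 2" by simp
  have "card {r\<in>observed. y r j \<noteq> 0} \<ge> 1" if "j \<in> U" for j
    using that finite_observed by (auto simp: U_def used_bins_def Suc_le_eq card_gt_0_iff)
  then have "(\<Sum>j\<in>E. card {r\<in>observed. y r j \<noteq> 0}) \<ge> (\<Sum>j\<in>E. 1)"
    by (intro sum_mono) (auto simp: E_def)
  then have "(\<Sum>j\<in>E. card {r\<in>observed. y r j \<noteq> 0}) \<ge> card E" by simp
  moreover have "(\<Sum>j\<in>U - E. card {r\<in>observed. y r j \<noteq> 0}) \<ge> (\<Sum>j\<in>U - E. 2)"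
    using used_bin_rows[OF y] by (intro sum_mono) (auto simp: E_def U_def)
  then have "(\<Sum>j\<in>U - E. card {r\<in>observed. y r j \<noteq> 0}) \<ge> 2 * card (U - E)" by simp
  moreover have "card (support y) =
      (\<Sum>j\<in>E. card {r\<in>observed. y r j \<noteq> 0}) + (\<Sum>j\<in>U - E. card {r\<in>observed. y r j \<noteq> 0})"
    using \<open>finite U\<close> by (simp add: card_support_by_columns U_def[symmetric] sum.subset_diff[of E U] E_def)
  moreover have "card U = card (U - E) + card E"
    using \<open>finite U\<close> card_mono[of U E] by (simp add: E_def card_Diff_subset)
  moreover have "card (support y) \<le> card observed + card U" using basic by (simp add: U_def)
  ultimately have "card U \<le> card observed + 2" using \<open>card E \<le> 2\<close> by linarith
  then show ?thesis by (simp add: U_def)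
qed

lemma calibrated_near_feasible:
  assumes y: "feasible a y"
  obtains q where "q \<in> calibrated_set T x" "l1_dist T p q \<le> cost a y + 4 * real k"
    "inj_on a {..<k} \<longrightarrow> l1_dist T p q \<le> cost a y + 4 * (real (card observed) + 2)"
proof -
  obtain y' where y': "feasible a y'" "cost a y' \<le> cost a y"
    and basic: "card (support y') \<le> card observed + card (used_bins y')"
    using exists_basic_feasible[OF y] by blast
  obtain q where q: "q \<in> calibrated_set T x"
    "l1_dist T p q \<le> cost a y' + 4 * (real (card (support y')) - real (card observed))"
    using calibrated_near_plan[OF y'(1)] by blast
  have "real (card (support y')) \<le> real (card observed) + real (card (used_bins y'))"
    using basic by (simp flip: of_nat_add)
  then have close: "l1_dist T p q \<le> cost a y + 4 * real (card (used_bins y'))"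
    using q(2) y'(2) by (smt (verit))
  show ?thesis
  proof (rule that[OF q(1)])
    have "card (used_bins y') \<le> k"
      using card_mono[of "{..<k}" "used_bins y'"] by (auto simp: used_bins_def)
    then show "l1_dist T p q \<le> cost a y + 4 * real k" using close by linarith
    show "inj_on a {..<k} \<longrightarrow> l1_dist T p q \<le> cost a y + 4 * (real (card observed) + 2)"
    proof
      assume "inj_on a {..<k}"
      then have "real (card (used_bins y')) \<le> real (card observed) + 2"
        using card_used_bins_le[OF y'(1) _ basic] by (simp flip: of_nat_add)
      then show "l1_dist T p q \<le> cost a y + 4 * (real (card observed) + 2)" using close by (smt (verit))
    qed
  qed
qed

end

section \<open>Plans from distributions calibrated in expectation\<close>

definition atoms :: "nat \<Rightarrow> (nat \<Rightarrow> real pmf) \<Rightarrow> real set" where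
  "atoms T D = (\<Union>t<T. set_pmf (D t))"

lemma atoms_lower_calibrated:
  assumes "D \<in> lower_calibrated_set T x"
  shows "finite (atoms T D)" "atoms T D \<subseteq> {0..1}"
  using assms by (auto simp: atoms_def lower_calibrated_set_def)

lemma sum_pmf_atoms:
  assumes "finite (atoms T D)" "t < T"
  shows "(\<Sum>\<alpha>\<in>atoms T D. pmf (D t) \<alpha>) = 1"
  using assms by (intro sum_pmf_eq_1) (auto simp: atoms_def)

lemma l1_dist_dist_atoms:
  assumes "finite (atoms T D)"
  shows "l1_dist_dist T p D = (\<Sum>t<T. \<Sum>\<alpha>\<in>atoms T D. pmf (D t) \<alpha> * \<bar>p t - \<alpha>\<bar>)"
  unfolding l1_dist_dist_def using assms
  by (intro sum.cong refl, subst integral_measure_pmf_real[of "atoms T D"])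
    (auto simp: atoms_def mult.commute)

lemma merged_atoms_calibrated:
  assumes D: "D \<in> lower_calibrated_set T x" and "finite A"
  shows "(\<Sum>t<T. (x t - weighted_mean (\<lambda>\<alpha>. \<Sum>t<T. pmf (D t) \<alpha>) A) * (\<Sum>\<alpha>\<in>A. pmf (D t) \<alpha>)) = 0"
proof -
  define \<mu> where "\<mu> = (\<lambda>\<alpha>. \<Sum>t<T. pmf (D t) \<alpha>)"
  define b where "b = weighted_mean \<mu> A"
  have cal: "(\<Sum>t<T. (x t - \<alpha>) * pmf (D t) \<alpha>) = 0" for \<alpha>
    using D by (simp add: lower_calibrated_set_def)
  have "(\<Sum>t<T. (x t - b) * (\<Sum>\<alpha>\<in>A. pmf (D t) \<alpha>)) = (\<Sum>\<alpha>\<in>A. \<Sum>t<T. (x t - b) * pmf (D t) \<alpha>)"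
    unfolding sum_distrib_left by (rule sum.swap)
  also have "\<dots> = (\<Sum>\<alpha>\<in>A. (\<Sum>t<T. (x t - \<alpha>) * pmf (D t) \<alpha>) + (\<alpha> - b) * \<mu> \<alpha>)"
    by (intro sum.cong refl) (simp add: \<mu>_def sum_distrib_left sum.distrib[symmetric] algebra_simps)
  also have "\<dots> = (\<Sum>\<alpha>\<in>A. \<alpha> * \<mu> \<alpha>) - b * (\<Sum>\<alpha>\<in>A. \<mu> \<alpha>)"
    by (simp only: cal) (simp add: left_diff_distrib sum_subtractf sum_distrib_left)
  also have "\<dots> = 0"
    unfolding b_def using weighted_mean_balance[OF \<open>finite A\<close>, of \<mu>] by (simp add: \<mu>_def sum_nonneg)
  finally show ?thesis by (simp only: b_def \<mu>_def)
qed

context calibration_plans begin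

definition aggregate :: "(nat \<Rightarrow> nat \<Rightarrow> real) \<Rightarrow> real \<times> real \<Rightarrow> nat \<Rightarrow> real" where
  "aggregate Y r j = (\<Sum>t | t < T \<and> obs t = r. Y t j)"

lemma feasible_aggregate:
  assumes "\<forall>j<k. a j \<in> {0..1}" "\<forall>t<T. \<forall>j<k. 0 \<le> Y t j" "\<forall>t<T. (\<Sum>j<k. Y t j) = 1"
    "\<forall>j<k. (\<Sum>t<T. (x t - a j) * Y t j) = 0"
  shows "feasible a (aggregate Y)"
proof -
  have "(\<Sum>j<k. aggregate Y r j) = real (obs_count r)" for r
  proof -
    have "(\<Sum>j<k. aggregate Y r j) = (\<Sum>t | t < T \<and> obs t = r. \<Sum>j<k. Y t j)"
      unfolding aggregate_def by (rule sum.swap)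
    also have "\<dots> = (\<Sum>t | t < T \<and> obs t = r. 1)"
      using assms(3) by (intro sum.cong) auto
    finally show ?thesis by (simp add: obs_count_def)
  qed
  moreover have "(\<Sum>r\<in>observed. (snd r - a j) * aggregate Y r j) = (\<Sum>t<T. (x t - a j) * Y t j)" for j
  proof -
    have "(\<Sum>r\<in>observed. (snd r - a j) * aggregate Y r j) =
        (\<Sum>r\<in>observed. \<Sum>t | t < T \<and> obs t = r. (x t - a j) * Y t j)"
      by (intro sum.cong refl) (auto simp: aggregate_def sum_distrib_left obs_def)
    then show ?thesis by (simp add: sum_observed_classes)
  qed
  moreover have "0 \<le> aggregate Y r j" if "j < k" for r j
    using assms(2) that by (auto simp: aggregate_def intro: sum_nonneg)
  ultimately show ?thesis
    using assms(1,4) by (simp add: feasible_def)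
qed

lemma cost_aggregate: "cost a (aggregate Y) = (\<Sum>t<T. \<Sum>j<k. Y t j * \<bar>p t - a j\<bar>)"
proof -
  have "cost a (aggregate Y) = (\<Sum>r\<in>observed. \<Sum>t | t < T \<and> obs t = r. \<Sum>j<k. Y t j * \<bar>p t - a j\<bar>)"
    unfolding cost_def aggregate_def
    by (subst sum.swap) (intro sum.cong refl, auto simp: sum_distrib_right obs_def)
  then show ?thesis by (simp add: sum_observed_classes)
qed

lemma bucketed_plan:
  assumes D: "D \<in> lower_calibrated_set T x" and g: "\<forall>\<alpha>\<in>atoms T D. g \<alpha> < k"
    and width: "\<forall>\<alpha>\<in>atoms T D. \<forall>\<alpha>'\<in>atoms T D. g \<alpha> = g \<alpha>' \<longrightarrow> \<bar>\<alpha> - \<alpha>'\<bar> \<le> \<delta>"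
  obtains \<beta> y where "feasible \<beta> y" "cost \<beta> y \<le> l1_dist_dist T p D + \<delta> * real T"
    "\<forall>\<alpha>\<in>atoms T D. \<bar>\<alpha> - \<beta> (g \<alpha>)\<bar> \<le> \<delta>"
proof -
  define V where "V = atoms T D"
  have V: "finite V" "V \<subseteq> {0..1}" using atoms_lower_calibrated[OF D] by (auto simp: V_def)
  define bucket where "bucket j = {\<alpha>\<in>V. g \<alpha> = j}" for j
  define \<mu> where "\<mu> \<alpha> = (\<Sum>t<T. pmf (D t) \<alpha>)" for \<alpha>
  \<comment> \<open>Each bucket of atoms is merged into its \<open>\<mu>\<close>-weighted mean, which keeps calibration.\<close>
  define \<beta> where "\<beta> j = weighted_mean \<mu> (bucket j)" for j
  define Y where "Y t j = (\<Sum>\<alpha>\<in>bucket j. pmf (D t) \<alpha>)" for t j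
  have fin_bucket: "finite (bucket j)" for j using V by (simp add: bucket_def)
  have \<mu>_nonneg: "\<forall>\<alpha>\<in>A. 0 \<le> \<mu> \<alpha>" for A by (simp add: \<mu>_def sum_nonneg)
  have regroup: "(\<Sum>j<k. \<Sum>\<alpha>\<in>bucket j. f \<alpha>) = (\<Sum>\<alpha>\<in>V. f \<alpha>)" for f :: "real \<Rightarrow> real"
    using sum.group[of V "{..<k}" g f] V g by (auto simp: bucket_def V_def)
  have \<beta>_close: "\<bar>\<alpha> - \<beta> (g \<alpha>)\<bar> \<le> \<delta>" if \<alpha>: "\<alpha> \<in> V" for \<alpha>
  proof -
    obtain t where t: "t < T" "\<alpha> \<in> set_pmf (D t)" using \<alpha> by (auto simp: V_def atoms_def)
    then have "0 < pmf (D t) \<alpha>" by (simp add: pmf_positive)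
    also have "\<dots> \<le> \<mu> \<alpha>" unfolding \<mu>_def using t(1) by (intro member_le_sum) auto
    finally show ?thesis
      unfolding \<beta>_def using width \<alpha> \<mu>_nonneg fin_bucket
      by (intro weighted_mean_near_member) (auto simp: bucket_def V_def)
  qed
  have "\<beta> j \<in> {0..1}" for j
    unfolding \<beta>_def using fin_bucket \<mu>_nonneg V by (intro weighted_mean_in_unit) (auto simp: bucket_def)
  moreover have "(\<Sum>j<k. Y t j) = 1" if t: "t < T" for t
    using sum_pmf_atoms[of T D t] V t by (simp add: Y_def regroup V_def)
  moreover have "(\<Sum>t<T. (x t - \<beta> j) * Y t j) = 0" for j
    unfolding \<beta>_def Y_def \<mu>_def by (rule merged_atoms_calibrated[OF D fin_bucket])
  ultimately have "feasible \<beta> (aggregate Y)"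
    by (intro feasible_aggregate) (auto simp: Y_def intro: sum_nonneg)
  moreover have "cost \<beta> (aggregate Y) \<le> l1_dist_dist T p D + \<delta> * real T"
  proof -
    have "cost \<beta> (aggregate Y) = (\<Sum>t<T. \<Sum>\<alpha>\<in>V. pmf (D t) \<alpha> * \<bar>p t - \<beta> (g \<alpha>)\<bar>)"
      unfolding cost_aggregate Y_def sum_distrib_right
      by (intro sum.cong refl, subst regroup[symmetric]) (auto simp: bucket_def)
    also have "\<dots> \<le> (\<Sum>t<T. \<Sum>\<alpha>\<in>V. pmf (D t) \<alpha> * \<bar>p t - \<alpha>\<bar> + pmf (D t) \<alpha> * \<delta>)"
    proof (intro sum_mono)
      fix t \<alpha> assume "\<alpha> \<in> V"
      then have "\<bar>p t - \<beta> (g \<alpha>)\<bar> \<le> \<bar>p t - \<alpha>\<bar> + \<delta>" using \<beta>_close by fastforce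
      then show "pmf (D t) \<alpha> * \<bar>p t - \<beta> (g \<alpha>)\<bar> \<le> pmf (D t) \<alpha> * \<bar>p t - \<alpha>\<bar> + pmf (D t) \<alpha> * \<delta>"
        by (metis distrib_left mult_left_mono pmf_nonneg)
    qed
    also have "\<dots> = l1_dist_dist T p D + \<delta> * real T"
      using sum_pmf_atoms[of T D] V
      by (simp add: l1_dist_dist_atoms V_def sum.distrib sum_distrib_right[symmetric])
    finally show ?thesis .
  qed
  ultimately show ?thesis using that \<beta>_close by (auto simp: V_def)
qed

end

section \<open>Bounds on the calibration distance\<close>

lemma CalDist_le_l1_dist:
  assumes "q \<in> calibrated_set T x"
  shows "CalDist T x p \<le> l1_dist T p q"
  unfolding CalDist_def using assms
  by (intro cINF_lower) (auto simp: bdd_below_def l1_dist_def intro!: exI[of _ 0] sum_nonneg)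

lemma return_pmf_in_lower_calibrated_set:
  assumes "binary_vec T x"
  shows "(\<lambda>t. return_pmf (x t)) \<in> lower_calibrated_set T x"
proof -
  have "(\<Sum>t<T. (x t - \<alpha>) * pmf (return_pmf (x t)) \<alpha>) = 0" for \<alpha>
    by (intro sum.neutral) (auto simp: pmf_return split: split_indicator)
  then show ?thesis using assms by (auto simp: lower_calibrated_set_def binary_vec_def)
qed

lemma LowerCalDist_nonneg:
  assumes "binary_vec T x"
  shows "0 \<le> LowerCalDist T x p"
  unfolding LowerCalDist_def l1_dist_dist_def
  using return_pmf_in_lower_calibrated_set[OF assms]
  by (intro cINF_greatest sum_nonneg integral_nonneg_AE) auto

lemma CalDist_le_LowerCalDist_plus:
  assumes "binary_vec T x"
    and "\<And>D. D \<in> lower_calibrated_set T x \<Longrightarrow> CalDist T x p \<le> l1_dist_dist T p D + E"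
  shows "CalDist T x p \<le> LowerCalDist T x p + E"
proof -
  have "CalDist T x p - E \<le> LowerCalDist T x p"
    unfolding LowerCalDist_def using return_pmf_in_lower_calibrated_set[OF assms(1)] assms(2)
    by (intro cINF_greatest) (auto simp: algebra_simps)
  then show ?thesis by simp
qed

lemma CalDist_le_l1_dist_dist_sqrt:
  assumes x: "binary_vec T x" and p: "unit_vec T p" and D: "D \<in> lower_calibrated_set T x" and "T > 0"
  shows "CalDist T x p \<le> l1_dist_dist T p D + 13 * sqrt (real T)"
proof -
  define M where "M = nat \<lceil>sqrt (real T)\<rceil>"
  have "1 \<le> sqrt (real T)" using \<open>T > 0\<close> by simp
  then have M: "sqrt (real T) \<le> real M" "real M < sqrt (real T) + 1" "0 < real M"
    unfolding M_def by linarith+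
  interpret calibration_plans T x p "M + 1" using x p by unfold_locales
  \<comment> \<open>Buckets \<open>[j/M, (j+1)/M)\<close>: the rounding loss \<open>4(M+1)\<close> and the bucketing loss \<open>T/M\<close>
    balance at \<open>M \<approx> \<surd>T\<close>.\<close>
  define g where "g \<alpha> = nat \<lfloor>\<alpha> * real M\<rfloor>" for \<alpha>
  have "\<forall>\<alpha>\<in>atoms T D. g \<alpha> < M + 1"
  proof
    fix \<alpha> assume "\<alpha> \<in> atoms T D"
    then have "\<alpha> \<in> {0..1}" using atoms_lower_calibrated(2)[OF D] by blast
    then have "\<alpha> * real M \<le> real M" using M(3) by (simp add: mult_left_le_one_le)
    then show "g \<alpha> < M + 1" unfolding g_def by linarith
  qed
  moreover have "\<forall>\<alpha>\<in>atoms T D. \<forall>\<alpha>'\<in>atoms T D. g \<alpha> = g \<alpha>' \<longrightarrow> \<bar>\<alpha> - \<alpha>'\<bar> \<le> 1 / real M"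
  proof (intro ballI impI)
    fix \<alpha> \<alpha>' assume that: "\<alpha> \<in> atoms T D" "\<alpha>' \<in> atoms T D" "g \<alpha> = g \<alpha>'"
    have "\<alpha> \<ge> 0" "\<alpha>' \<ge> 0" using atoms_lower_calibrated(2)[OF D] that(1,2) by auto
    then have "\<lfloor>\<alpha> * real M\<rfloor> = \<lfloor>\<alpha>' * real M\<rfloor>" using that(3) by (simp add: g_def eq_nat_nat_iff)
    then have "\<bar>\<alpha> * real M - \<alpha>' * real M\<bar> \<le> 1"
      using floor_correct[of "\<alpha> * real M"] floor_correct[of "\<alpha>' * real M"] by linarith
    moreover have "\<bar>\<alpha> * real M - \<alpha>' * real M\<bar> = \<bar>\<alpha> - \<alpha>'\<bar> * real M"
      by (simp add: abs_mult flip: left_diff_distrib)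
    ultimately show "\<bar>\<alpha> - \<alpha>'\<bar> \<le> 1 / real M" using M(3) by (simp add: le_divide_eq)
  qed
  ultimately obtain \<beta> y where plan: "feasible \<beta> y"
    and cost: "cost \<beta> y \<le> l1_dist_dist T p D + 1 / real M * real T"
    by (rule bucketed_plan[OF D])
  obtain q where q: "q \<in> calibrated_set T x" "l1_dist T p q \<le> cost \<beta> y + 4 * real (M + 1)"
    using calibrated_near_feasible[OF plan] by blast
  have "real T = sqrt (real T) * sqrt (real T)" by simp
  also have "\<dots> \<le> sqrt (real T) * real M" using M(1) by (intro mult_left_mono) auto
  finally have "1 / real M * real T \<le> sqrt (real T)" using M(3) by (simp add: pos_divide_le_eq)
  then have "l1_dist T p q \<le> l1_dist_dist T p D + 13 * sqrt (real T)"
    using q(2) cost M(2) \<open>1 \<le> sqrt (real T)\<close> unfolding of_nat_add of_nat_1 by (smt (verit))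
  with CalDist_le_l1_dist[OF q(1), of p] show ?thesis by linarith
qed

lemma CalDist_le_l1_dist_dist_card:
  assumes x: "binary_vec T x" and p: "unit_vec T p" and D: "D \<in> lower_calibrated_set T x" and "T > 0"
  shows "CalDist T x p \<le> l1_dist_dist T p D + 16 * real (card (p ` {..<T}))"
proof -
  let ?n = "card (atoms T D)"
  obtain e where e: "bij_betw e {..<?n} (atoms T D)"
    using ex_bij_betw_nat_finite[OF atoms_lower_calibrated(1)[OF D]] by (auto simp: atLeast0LessThan)
  define g where "g = inv_into {..<?n} e"
  have g: "\<forall>\<alpha>\<in>atoms T D. g \<alpha> < ?n" "\<forall>\<alpha>\<in>atoms T D. e (g \<alpha>) = \<alpha>"
    using bij_betwE[OF bij_betw_inv_into[OF e]] e unfolding g_def bij_betw_def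
    by (auto intro: f_inv_into_f)
  have g_e: "g (e i) = i" if "i < ?n" for i
    using e that unfolding g_def by (auto simp: bij_betw_def inv_into_f_f)
  interpret calibration_plans T x p ?n using x p by unfold_locales
  \<comment> \<open>One bucket per atom: no bucketing loss, and distinct bins get distinct values.\<close>
  have "\<forall>\<alpha>\<in>atoms T D. \<forall>\<alpha>'\<in>atoms T D. g \<alpha> = g \<alpha>' \<longrightarrow> \<bar>\<alpha> - \<alpha>'\<bar> \<le> 0"
  proof (intro ballI impI)
    fix \<alpha> \<alpha>' assume "\<alpha> \<in> atoms T D" "\<alpha>' \<in> atoms T D" "g \<alpha> = g \<alpha>'"
    then have "\<alpha> = \<alpha>'" using g(2) by metis
    then show "\<bar>\<alpha> - \<alpha>'\<bar> \<le> 0" by simp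
  qed
  then obtain \<beta> y where plan: "feasible \<beta> y" and cost: "cost \<beta> y \<le> l1_dist_dist T p D + 0 * real T"
    and \<beta>: "\<forall>\<alpha>\<in>atoms T D. \<bar>\<alpha> - \<beta> (g \<alpha>)\<bar> \<le> 0"
    by (rule bucketed_plan[OF D g(1)])
  have "\<beta> i = e i" if "i < ?n" for i
    using \<beta> g_e[OF that] bij_betwE[OF e] that by force
  then have "inj_on \<beta> {..<?n}"
    using e by (auto simp: bij_betw_def inj_on_def)
  then obtain q where q: "q \<in> calibrated_set T x"
    "l1_dist T p q \<le> cost \<beta> y + 4 * (real (card observed) + 2)"
    using calibrated_near_feasible[OF plan] by blast
  define m where "m = card (p ` {..<T})"
  have "observed \<subseteq> p ` {..<T} \<times> {0, 1}" using x by (auto simp: observed_def obs_def binary_vec_def)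
  then have "card observed \<le> card (p ` {..<T} \<times> {0 :: real, 1})" by (intro card_mono) auto
  then have "real (card observed) \<le> 2 * real m" by (simp add: card_cartesian_product m_def)
  moreover have "1 \<le> m" using \<open>T > 0\<close> by (auto simp: m_def Suc_le_eq card_gt_0_iff)
  ultimately have "l1_dist T p q \<le> l1_dist_dist T p D + 16 * real m"
    using q(2) cost by simp
  with CalDist_le_l1_dist[OF q(1), of p] show ?thesis by (simp add: m_def)
qed

theorem theorem2:
  "\<exists>C::real. C > 0 \<and>
     (\<forall>T::nat. \<forall>x p. T > 0 \<longrightarrow> binary_vec T x \<longrightarrow> unit_vec T p \<longrightarrow>
        CalDist T x p \<le> LowerCalDist T x p + C * sqrt (real T) \<and>
        CalDist T x p \<le> C * LowerCalDist T x p + C * real (card (p ` {..<T})))"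
proof (intro exI[of _ 16] conjI allI impI)
  fix T :: nat and x p assume "T > 0" and x: "binary_vec T x" and p: "unit_vec T p"
  have "CalDist T x p \<le> LowerCalDist T x p + 13 * sqrt (real T)"
    using CalDist_le_LowerCalDist_plus[OF x] CalDist_le_l1_dist_dist_sqrt[OF x p _ \<open>T > 0\<close>] by blast
  then show "CalDist T x p \<le> LowerCalDist T x p + 16 * sqrt (real T)"
    using real_sqrt_ge_zero[of "real T"] by linarith
  have "CalDist T x p \<le> LowerCalDist T x p + 16 * real (card (p ` {..<T}))"
    using CalDist_le_LowerCalDist_plus[OF x] CalDist_le_l1_dist_dist_card[OF x p _ \<open>T > 0\<close>] by blast
  with LowerCalDist_nonneg[OF x, of p]
  show "CalDist T x p \<le> 16 * LowerCalDist T x p + 16 * real (card (p ` {..<T}))" by simp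
qed simp

end
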